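(* Fix $t\in[T]$ and suppose $\|\theta^*\|_2\le L_\theta$ and $\|\widehat\theta_t-\theta^*\|_{\Sigma_t}\le\beta_t$. Let $p^*\in\mathbb{R}^{\mathcal{S}\times\mathcal{A}\times\mathcal{S}}$ be given by $p^*_{s,a,s'}=p(s'\mid s,a,\theta^* )$. Then $p^*\in\mathcal{P}_t$, where $\mathcal{P}_t$ is the set of $p\in[0,1]^{\mathcal{S}\times\mathcal{A}\times\mathcal{S}}$ such that for all $(s,a)\in\mathcal{S}\times\mathcal{A}$: $\sum_{s'\in\mathcal{S}_{s,a}}p_{s,a,s'}=1$ and $\sum_{s'\in\mathcal{S}_{s,a}}|p_{s,a,s'}-p(s'\mid s,a,\widehat\theta_t)|\le B^{1,t}_{s,a}+B^{2,t}_{s,a}$, with $B^{1,t}_{s,a}=\beta_t\sum_{s'\in\mathcal{S}_{s,a}}p(s'\mid s,a,\widehat\theta_t)\big\|\varphi(s,a,s')-\sum_{s''\in\mathcal{S}_{s,a}}p(s''\mid s,a,\widehat\theta_t)\varphi(s,a,s'')\big\|_{\Sigma_t^{-1}}$ and $B^{2,t}_{s,a}=3\beta_t^2\max_{s'\in\mathcal{S}_{s,a}}\|\varphi(s,a,s')\|_{\Sigma_t^{-1}}^2$.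
   Context: MNL model: finite $\mathcal{S},\mathcal{A}$; known reachable sets $\mathcal{S}_{s,a}$ and features $\varphi(s,a,s')\in\mathbb{R}^d$; $p(s'\mid s,a,\theta)=\exp(\varphi(s,a,s')^\top\theta)/\sum_{s''\in\mathcal{S}_{s,a}}\exp(\varphi(s,a,s'')^\top\theta)$ for $s'\in\mathcal{S}_{s,a}$, $0$ otherwise; $\theta^*$ is the unknown true parameter. $\widehat\theta_t\in\mathbb{R}^d$ is the online estimate and $\Sigma_t$ the positive definite matrix $\Sigma_t=\lambda I_d+\sum_{i<t}\nabla^2\ell_i(\widehat\theta_{i+1})$ ($\lambda>0$) produced by the online Newton-type estimator on the observed trajectory (with $\ell_i$ the multinomial log-loss of step $i$); $\beta_t>0$ is the confidence radius (in the paper $\beta_t=f(L_\theta,L_\varphi)\sqrt d(\log(\mathcal{U}t/\delta))^2$ for a polynomial $f$). $\|x\|_A=\sqrt{x^\top Ax}$. *)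

theory Defs
  imports "HOL-Analysis.Analysis"
begin

text \<open>MNL transition probability p(s' | s, a, theta); Sr s a is the reachable set S_{s,a}.\<close>
definition mnl_prob ::
  "('s \<Rightarrow> 'a \<Rightarrow> 's set) \<Rightarrow> ('s \<Rightarrow> 'a \<Rightarrow> 's \<Rightarrow> real^'d) \<Rightarrow> real^'d \<Rightarrow> 's \<Rightarrow> 'a \<Rightarrow> 's \<Rightarrow> real" where
  "mnl_prob Sr phi theta s a s' =
     (if s' \<in> Sr s a
      then exp (phi s a s' \<bullet> theta) / (\<Sum>s''\<in>Sr s a. exp (phi s a s'' \<bullet> theta))
      else 0)"

definition mnorm :: "real^'d^'d \<Rightarrow> real^'d \<Rightarrow> real" where
  "mnorm M x = sqrt (x \<bullet> (M *v x))"

definition pos_def_mat :: "real^'d^'d \<Rightarrow> bool" where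
  "pos_def_mat M \<longleftrightarrow> transpose M = M \<and> (\<forall>x. x \<noteq> 0 \<longrightarrow> x \<bullet> (M *v x) > 0)"

definition bonus1 ::
  "('s \<Rightarrow> 'a \<Rightarrow> 's set) \<Rightarrow> ('s \<Rightarrow> 'a \<Rightarrow> 's \<Rightarrow> real^'d) \<Rightarrow> real^'d \<Rightarrow> real^'d^'d \<Rightarrow> real \<Rightarrow> 's \<Rightarrow> 'a \<Rightarrow> real" where
  "bonus1 Sr phi theta Sig beta s a =
     beta * (\<Sum>s'\<in>Sr s a. mnl_prob Sr phi theta s a s' *
        mnorm (matrix_inv Sig)
          (phi s a s' - (\<Sum>s''\<in>Sr s a. mnl_prob Sr phi theta s a s'' *\<^sub>R phi s a s'')))"

definition bonus2 ::
  "('s \<Rightarrow> 'a \<Rightarrow> 's set) \<Rightarrow> ('s \<Rightarrow> 'a \<Rightarrow> 's \<Rightarrow> real^'d) \<Rightarrow> real^'d^'d \<Rightarrow> real \<Rightarrow> 's \<Rightarrow> 'a \<Rightarrow> real" where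
  "bonus2 Sr phi Sig beta s a =
     3 * beta\<^sup>2 * Max ((\<lambda>s'. (mnorm (matrix_inv Sig) (phi s a s'))\<^sup>2) ` Sr s a)"

definition conf_set ::
  "('s \<Rightarrow> 'a \<Rightarrow> 's set) \<Rightarrow> ('s \<Rightarrow> 'a \<Rightarrow> 's \<Rightarrow> real^'d) \<Rightarrow> real^'d \<Rightarrow> real^'d^'d \<Rightarrow> real
     \<Rightarrow> ('s \<Rightarrow> 'a \<Rightarrow> 's \<Rightarrow> real) set" where
  "conf_set Sr phi theta Sig beta =
     {p. (\<forall>s a s'. 0 \<le> p s a s' \<and> p s a s' \<le> 1) \<and>
         (\<forall>s a. (\<Sum>s'\<in>Sr s a. p s a s') = 1 \<and>
                (\<Sum>s'\<in>Sr s a. \<bar>p s a s' - mnl_prob Sr phi theta s a s'\<bar>)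
                  \<le> bonus1 Sr phi theta Sig beta s a + bonus2 Sr phi Sig beta s a)}"

end

theory Submission
  imports Defs
begin

(* Writing z(s') = phi(s,a,s')^T (theta* - theta_hat), the true MNL distribution is the
   exponential tilt p(s') e^z(s') / sum p e^z of the estimated one p.  For a probability vector p
   and a tilt with z^2 <= M, the L1 change is at most the p-mean absolute deviation of z plus 3M:
   after centring z, first-order terms give the deviation and the second-order remainder of exp
   is at most 3/2 z^2.  Cauchy-Schwarz in the geometry of Sigma_t gives
   |x^T (theta* - theta_hat)| <= beta_t ||x||_{Sigma_t^-1}, which turns these two terms into
   B^1 and B^2. *)

lemma matrix_mul_matrix_inv_right:
  fixes A :: "'a::semiring_1^'n^'m"
  assumes "invertible A"
  shows "A ** matrix_inv A = mat 1"
  using assms unfolding invertible_def matrix_inv_def by (rule someI_ex[THEN conjunct1])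

lemma pos_def_mat_invertible:
  fixes S :: "real^'n^'n"
  assumes "pos_def_mat S"
  shows "invertible S"
proof -
  have "S *v x = 0 \<Longrightarrow> x = 0" for x
    using assms unfolding pos_def_mat_def by (metis inner_zero_right less_irrefl)
  then show ?thesis
    using matrix_left_invertible_ker invertible_left_inverse by blast
qed

lemma pos_def_mat_matrix_inv_cancel:
  fixes S :: "real^'n^'n"
  assumes "pos_def_mat S"
  shows "S *v (matrix_inv S *v x) = x"
  by (simp add: assms matrix_vector_mul_assoc matrix_mul_matrix_inv_right pos_def_mat_invertible)

lemma symmetric_matrix_inner_commute:
  fixes S :: "real^'n^'n"
  assumes "transpose S = S"
  shows "u \<bullet> (S *v v) = (S *v u) \<bullet> v"
  by (metis assms dot_lmul_matrix transpose_matrix_vector)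

lemma pos_def_mat_quadratic_nonneg:
  fixes S :: "real^'n^'n"
  assumes "pos_def_mat S"
  shows "0 \<le> v \<bullet> (S *v v)"
  using assms unfolding pos_def_mat_def by (cases "v = 0") (auto intro: less_imp_le)

lemma pos_def_mat_cauchy_schwarz:
  fixes S :: "real^'n^'n"
  assumes "pos_def_mat S"
  shows "(u \<bullet> (S *v v))\<^sup>2 \<le> (u \<bullet> (S *v u)) * (v \<bullet> (S *v v))"
proof (cases "v = 0")
  case False
  define a where "a = u \<bullet> (S *v u)"
  define b where "b = v \<bullet> (S *v v)"
  define c where "c = u \<bullet> (S *v v)"
  have "b > 0" using False assms unfolding pos_def_mat_def b_def by auto
  have swap: "v \<bullet> (S *v u) = u \<bullet> (S *v v)"
    using assms unfolding pos_def_mat_def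
    by (metis symmetric_matrix_inner_commute inner_commute)
  define l where "l = - c / b"
  have "0 \<le> (u + l *\<^sub>R v) \<bullet> (S *v (u + l *\<^sub>R v))"
    using pos_def_mat_quadratic_nonneg[OF assms] .
  also have "\<dots> = a + 2 * l * c + l\<^sup>2 * b"
    unfolding a_def b_def c_def using swap
    by (simp add: matrix_vector_right_distrib matrix_vector_mult_scaleR inner_add_left
        inner_add_right power2_eq_square algebra_simps)
  also have "\<dots> = a - c\<^sup>2 / b"
    using \<open>b > 0\<close> unfolding l_def by (simp add: field_simps power2_eq_square)
  finally have "c\<^sup>2 \<le> a * b"
    using \<open>b > 0\<close> by (simp add: divide_le_eq)
  then show ?thesis unfolding a_def b_def c_def .
qed simp

lemma quadratic_form_matrix_inv:
  fixes S :: "real^'n^'n"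
  assumes "pos_def_mat S"
  shows "x \<bullet> (matrix_inv S *v x) = (matrix_inv S *v x) \<bullet> (S *v (matrix_inv S *v x))"
  by (simp add: assms pos_def_mat_matrix_inv_cancel inner_commute)

lemma mnorm_matrix_inv_nonneg:
  fixes S :: "real^'n^'n"
  assumes "pos_def_mat S"
  shows "0 \<le> mnorm (matrix_inv S) x"
  unfolding mnorm_def quadratic_form_matrix_inv[OF assms]
  using pos_def_mat_quadratic_nonneg[OF assms] by simp

lemma abs_inner_le_mnorm_matrix_inv:
  fixes S :: "real^'n^'n"
  assumes "pos_def_mat S"
  shows "\<bar>x \<bullet> y\<bar> \<le> mnorm (matrix_inv S) x * mnorm S y"
proof -
  define u where "u = matrix_inv S *v x"
  have "x \<bullet> y = u \<bullet> (S *v y)"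
    using assms unfolding u_def pos_def_mat_def
    by (metis pos_def_mat_matrix_inv_cancel[OF assms] symmetric_matrix_inner_commute)
  then have "(x \<bullet> y)\<^sup>2 \<le> (x \<bullet> (matrix_inv S *v x)) * (y \<bullet> (S *v y))"
    using pos_def_mat_cauchy_schwarz[OF assms, of u y]
    unfolding u_def quadratic_form_matrix_inv[OF assms] by simp
  then have "sqrt ((x \<bullet> y)\<^sup>2) \<le> sqrt (x \<bullet> (matrix_inv S *v x)) * sqrt (y \<bullet> (S *v y))"
    by (metis real_sqrt_le_mono real_sqrt_mult)
  then show ?thesis unfolding mnorm_def by simp
qed

lemma mnorm_minus_commute: "mnorm M (x - y) = mnorm M (y - x)"
  by (simp add: mnorm_def matrix_vector_mult_diff_distrib inner_diff_left inner_diff_right)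

lemma abs_inner_le_confidence_radius:
  fixes S :: "real^'n^'n"
  assumes "pos_def_mat S" "mnorm S (theta - theta') \<le> b"
  shows "\<bar>x \<bullet> (theta' - theta)\<bar> \<le> mnorm (matrix_inv S) x * b"
proof -
  have "\<bar>x \<bullet> (theta' - theta)\<bar> \<le> mnorm (matrix_inv S) x * mnorm S (theta' - theta)"
    by (rule abs_inner_le_mnorm_matrix_inv[OF assms(1)])
  also have "\<dots> \<le> mnorm (matrix_inv S) x * b"
    using assms(2) mnorm_matrix_inv_nonneg[OF assms(1)]
    by (intro mult_left_mono) (auto simp: mnorm_minus_commute)
  finally show ?thesis .
qed

lemma exp_minus_one_minus_le:
  fixes a :: real
  assumes "a\<^sup>2 \<le> 8/3"
  shows "exp a - 1 - a \<le> 3/2 * a\<^sup>2"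
proof -
  define r where "r = \<bar>a\<bar>"
  have "r\<^sup>2 \<le> 8/3" "0 \<le> r" using assms unfolding r_def by simp_all
  then have "r \<le> 2" using power2_le_imp_le[of r 2] by simp
  obtain t where "\<bar>t\<bar> \<le> r"
    and taylor: "exp a = (\<Sum>m<5. a ^ m / fact m) + exp t / fact 5 * a ^ 5"
    using Maclaurin_exp_le[of a 5] unfolding r_def by blast
  have "exp t \<le> 9"
  proof -
    have "exp t \<le> exp 1 * exp 1"
      using \<open>\<bar>t\<bar> \<le> r\<close> \<open>r \<le> 2\<close> by (simp flip: exp_add)
    also have "\<dots> \<le> 3 * 3" using exp_le by (intro mult_mono) auto
    finally show ?thesis by simp
  qed
  have "exp a - 1 - a - a\<^sup>2 / 2 = a ^ 3 / 6 + a ^ 4 / 24 + exp t / 120 * a ^ 5"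
    using taylor by (simp add: numeral_eq_Suc fact_numeral)
  also have "\<dots> \<le> r ^ 3 / 6 + r ^ 4 / 24 + 9 / 120 * r ^ 5"
  proof -
    have "a ^ 3 \<le> r ^ 3" "a ^ 4 = r ^ 4"
      unfolding r_def by (metis abs_ge_self power_abs, simp)
    moreover have "exp t * a ^ 5 \<le> 9 * r ^ 5"
    proof -
      have "exp t * a ^ 5 \<le> exp t * r ^ 5"
        unfolding r_def by (metis abs_ge_self power_abs exp_ge_zero mult_left_mono)
      also have "\<dots> \<le> 9 * r ^ 5"
        using \<open>exp t \<le> 9\<close> \<open>0 \<le> r\<close> by (intro mult_right_mono) auto
      finally show ?thesis .
    qed
    ultimately show ?thesis by linarith
  qed
  also have "\<dots> = r\<^sup>2 * (r / 6 + r\<^sup>2 / 24 + 3 / 40 * (r * r\<^sup>2))"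
    by (simp add: eval_nat_numeral field_simps)
  also have "\<dots> \<le> r\<^sup>2 * 1"
  proof -
    have "r * r\<^sup>2 \<le> 2 * (8 / 3)"
      using \<open>r \<le> 2\<close> \<open>r\<^sup>2 \<le> 8/3\<close> \<open>0 \<le> r\<close> by (intro mult_mono) auto
    then show ?thesis
      using \<open>r \<le> 2\<close> \<open>r\<^sup>2 \<le> 8/3\<close> by (intro mult_left_mono) auto
  qed
  finally show ?thesis unfolding r_def by simp
qed

lemma weighted_variance_eq:
  fixes p z :: "'i \<Rightarrow> real"
  assumes "sum p I = 1"
  shows "(\<Sum>i\<in>I. p i * (z i - (\<Sum>j\<in>I. p j * z j))\<^sup>2)
    = (\<Sum>i\<in>I. p i * (z i)\<^sup>2) - (\<Sum>j\<in>I. p j * z j)\<^sup>2"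
proof -
  define m where "m = (\<Sum>j\<in>I. p j * z j)"
  have "(\<Sum>i\<in>I. p i * (z i - m)\<^sup>2) = (\<Sum>i\<in>I. p i * (z i)\<^sup>2 - 2 * m * (p i * z i) + m\<^sup>2 * p i)"
    by (intro sum.cong) (auto simp: power2_eq_square algebra_simps)
  also have "\<dots> = (\<Sum>i\<in>I. p i * (z i)\<^sup>2) - m\<^sup>2"
    by (simp add: sum.distrib sum_subtractf assms power2_eq_square flip: sum_distrib_left m_def)
  finally show ?thesis unfolding m_def .
qed

lemma exp_tilt_l1_dist_le_two:
  fixes p z :: "'i \<Rightarrow> real"
  assumes "finite I" "\<And>i. i \<in> I \<Longrightarrow> 0 \<le> p i" "sum p I = 1"
  shows "(\<Sum>i\<in>I. \<bar>p i * exp (z i) / (\<Sum>j\<in>I. p j * exp (z j)) - p i\<bar>) \<le> 2"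
proof -
  define S where "S = (\<Sum>j\<in>I. p j * exp (z j))"
  obtain i where "i \<in> I" "0 < p i"
    using assms(3) sum_nonpos[of I p] by (metis not_le zero_less_one)
  then have "S > 0"
    unfolding S_def using assms(1,2) by (intro sum_pos2[of I i]) auto
  have "(\<Sum>i\<in>I. \<bar>p i * exp (z i) / S - p i\<bar>) \<le> (\<Sum>i\<in>I. p i * exp (z i) / S + p i)"
    using assms(2) \<open>S > 0\<close> by (intro sum_mono) (simp add: abs_le_iff)
  also have "\<dots> = 2"
    using \<open>S > 0\<close> assms(3) by (simp add: sum.distrib S_def flip: sum_divide_distrib)
  finally show ?thesis unfolding S_def .
qed

lemma exp_tilt_centered_l1_dist_le:
  fixes p a :: "'i \<Rightarrow> real"
  assumes "finite I" "\<And>i. i \<in> I \<Longrightarrow> 0 \<le> p i" "sum p I = 1"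
    and centered: "(\<Sum>i\<in>I. p i * a i) = 0"
  shows "(\<Sum>i\<in>I. \<bar>p i * exp (a i) / (\<Sum>j\<in>I. p j * exp (a j)) - p i\<bar>)
    \<le> (\<Sum>i\<in>I. p i * \<bar>a i\<bar>) + 2 * (\<Sum>i\<in>I. p i * (exp (a i) - 1 - a i))"
proof -
  define S where "S = (\<Sum>j\<in>I. p j * exp (a j))"
  define g where "g i = exp (a i) - 1 - a i" for i
  have "0 \<le> g i" for i
    unfolding g_def using exp_ge_add_one_self[of "a i"] by linarith
  have S_minus_one: "S - 1 = (\<Sum>i\<in>I. p i * g i)"
    unfolding S_def g_def using assms(3) centered
    by (simp add: right_diff_distrib sum_subtractf)
  then have "1 \<le> S"
    using assms(2) \<open>\<And>i. 0 \<le> g i\<close> by (smt (verit) sum_nonneg mult_nonneg_nonneg)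
  have "\<bar>p i * exp (a i) / S - p i\<bar> \<le> p i * \<bar>a i\<bar> + p i * g i + p i * (S - 1)"
    if "i \<in> I" for i
  proof -
    have "\<bar>p i * exp (a i) / S - p i\<bar> = \<bar>p i * (exp (a i) - S) / S\<bar>"
      using \<open>1 \<le> S\<close> by (simp add: right_diff_distrib diff_divide_distrib)
    also have "\<dots> = p i * \<bar>exp (a i) - S\<bar> / S"
      using \<open>1 \<le> S\<close> assms(2)[OF that] by (simp add: abs_mult)
    also have "\<dots> \<le> p i * \<bar>exp (a i) - S\<bar>"
      using divide_left_mono[of 1 S "p i * \<bar>exp (a i) - S\<bar>"] \<open>1 \<le> S\<close> assms(2)[OF that]
      by simp
    also have "\<dots> \<le> p i * (\<bar>a i\<bar> + g i + (S - 1))"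
      using assms(2)[OF that] \<open>0 \<le> g i\<close> \<open>1 \<le> S\<close> unfolding g_def
      by (intro mult_left_mono) auto
    finally show ?thesis by (simp add: algebra_simps)
  qed
  then have "(\<Sum>i\<in>I. \<bar>p i * exp (a i) / S - p i\<bar>)
      \<le> (\<Sum>i\<in>I. p i * \<bar>a i\<bar> + p i * g i + p i * (S - 1))"
    by (rule sum_mono)
  also have "\<dots> = (\<Sum>i\<in>I. p i * \<bar>a i\<bar>) + 2 * (\<Sum>i\<in>I. p i * g i)"
    using assms(3) S_minus_one by (simp add: sum.distrib flip: sum_distrib_right)
  finally show ?thesis unfolding S_def g_def .
qed

(* If 3M >= 2 the trivial bound 2 suffices; otherwise the centred exponents satisfy
   a^2 <= 4M < 8/3, where the quadratic bound on the remainder of exp applies. *)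
lemma exp_tilt_l1_dist_le:
  fixes p z :: "'i \<Rightarrow> real"
  assumes "finite I" "\<And>i. i \<in> I \<Longrightarrow> 0 \<le> p i" "sum p I = 1"
    and z_sq_le: "\<And>i. i \<in> I \<Longrightarrow> (z i)\<^sup>2 \<le> M"
  shows "(\<Sum>i\<in>I. \<bar>p i * exp (z i) / (\<Sum>j\<in>I. p j * exp (z j)) - p i\<bar>)
    \<le> (\<Sum>i\<in>I. p i * \<bar>z i - (\<Sum>j\<in>I. p j * z j)\<bar>) + 3 * M"
proof (cases "2 \<le> 3 * M")
  case True
  have "0 \<le> (\<Sum>i\<in>I. p i * \<bar>z i - (\<Sum>j\<in>I. p j * z j)\<bar>)"
    using assms(2) by (simp add: sum_nonneg)
  then show ?thesis using exp_tilt_l1_dist_le_two[OF assms(1-3), of z] True by linarith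
next
  case False
  define m where "m = (\<Sum>j\<in>I. p j * z j)"
  define a where "a i = z i - m" for i
  have "(\<Sum>i\<in>I. p i * (z i)\<^sup>2) \<le> (\<Sum>i\<in>I. p i * M)"
    using assms(2) z_sq_le by (intro sum_mono mult_left_mono) auto
  then have second_moment: "(\<Sum>i\<in>I. p i * (z i)\<^sup>2) \<le> M"
    using assms(3) by (simp flip: sum_distrib_right)
  have variance: "(\<Sum>i\<in>I. p i * (a i)\<^sup>2) = (\<Sum>i\<in>I. p i * (z i)\<^sup>2) - m\<^sup>2"
    unfolding a_def m_def using weighted_variance_eq[OF assms(3)] .
  moreover have "0 \<le> (\<Sum>i\<in>I. p i * (a i)\<^sup>2)"
    using assms(2) by (simp add: sum_nonneg)
  ultimately have "m\<^sup>2 \<le> M" using second_moment by linarith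
  have "(a i)\<^sup>2 \<le> 8/3" if "i \<in> I" for i
  proof -
    have "(a i)\<^sup>2 \<le> 2 * (z i)\<^sup>2 + 2 * m\<^sup>2"
      unfolding a_def using zero_le_power2[of "z i + m"]
      by (simp add: power2_eq_square algebra_simps)
    then show ?thesis using z_sq_le[OF that] \<open>m\<^sup>2 \<le> M\<close> False by linarith
  qed
  then have "(\<Sum>i\<in>I. p i * (exp (a i) - 1 - a i)) \<le> (\<Sum>i\<in>I. p i * (3/2 * (a i)\<^sup>2))"
    using assms(2) exp_minus_one_minus_le by (intro sum_mono mult_left_mono) auto
  also have "\<dots> = 3/2 * (\<Sum>i\<in>I. p i * (a i)\<^sup>2)"
    by (simp add: sum_distrib_left algebra_simps)
  also have "\<dots> \<le> 3/2 * M"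
    using variance second_moment zero_le_power2[of m] by linarith
  finally have remainder: "(\<Sum>i\<in>I. p i * (exp (a i) - 1 - a i)) \<le> 3/2 * M" .
  have "(\<Sum>i\<in>I. p i * a i) = 0"
    unfolding a_def m_def
    by (simp add: right_diff_distrib sum_subtractf assms(3) flip: sum_distrib_right)
  from exp_tilt_centered_l1_dist_le[OF assms(1-3) this] remainder
  have "(\<Sum>i\<in>I. \<bar>p i * exp (a i) / (\<Sum>j\<in>I. p j * exp (a j)) - p i\<bar>)
    \<le> (\<Sum>i\<in>I. p i * \<bar>z i - m\<bar>) + 3 * M"
    unfolding a_def by linarith
  moreover have "p i * exp (a i) / (\<Sum>j\<in>I. p j * exp (a j))
      = p i * exp (z i) / (\<Sum>j\<in>I. p j * exp (z j))" for i
    unfolding a_def by (simp add: exp_diff sum_divide_distrib[symmetric])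
  ultimately show ?thesis unfolding m_def by simp
qed

lemma mnl_prob_nonneg: "0 \<le> mnl_prob Sr phi theta s a s'"
  unfolding mnl_prob_def by (simp add: sum_nonneg)

lemma sum_exp_inner_pos:
  assumes "finite A" "A \<noteq> {}"
  shows "0 < (\<Sum>x\<in>A. exp (f x \<bullet> theta))"
  using assms by (intro sum_pos) auto

lemma mnl_prob_le_one:
  assumes "finite (Sr s a)"
  shows "mnl_prob Sr phi theta s a s' \<le> 1"
proof (cases "s' \<in> Sr s a")
  case True
  then have "exp (phi s a s' \<bullet> theta) \<le> (\<Sum>s''\<in>Sr s a. exp (phi s a s'' \<bullet> theta))"
    using assms by (intro member_le_sum) auto
  moreover have "0 < (\<Sum>s''\<in>Sr s a. exp (phi s a s'' \<bullet> theta))"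
    using True assms by (intro sum_exp_inner_pos) auto
  ultimately show ?thesis
    unfolding mnl_prob_def using True by simp
qed (simp add: mnl_prob_def)

lemma sum_mnl_prob:
  assumes "finite (Sr s a)" "Sr s a \<noteq> {}"
  shows "(\<Sum>s'\<in>Sr s a. mnl_prob Sr phi theta s a s') = 1"
  unfolding mnl_prob_def using sum_exp_inner_pos[OF assms, of "phi s a" theta]
  by (simp add: sum_divide_distrib[symmetric])

lemma mnl_prob_exp_tilt:
  fixes Sr :: "'s \<Rightarrow> 'a \<Rightarrow> 's set" and phi :: "'s \<Rightarrow> 'a \<Rightarrow> 's \<Rightarrow> real^'d"
    and theta theta' :: "real^'d"
  assumes "finite (Sr s a)" "s' \<in> Sr s a"
  defines "p \<equiv> mnl_prob Sr phi theta s a"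
    and "z \<equiv> \<lambda>x. phi s a x \<bullet> (theta' - theta)"
  shows "mnl_prob Sr phi theta' s a s'
    = p s' * exp (z s') / (\<Sum>x\<in>Sr s a. p x * exp (z x))"
proof -
  define Z where "Z theta = (\<Sum>x\<in>Sr s a. exp (phi s a x \<bullet> theta))" for theta
  have "Sr s a \<noteq> {}" using assms(2) by auto
  then have Z_pos: "0 < Z theta" "0 < Z theta'"
    unfolding Z_def using sum_exp_inner_pos[OF assms(1)] by blast+
  have tilt: "p x * exp (z x) = exp (phi s a x \<bullet> theta') / Z theta" if "x \<in> Sr s a" for x
    using that unfolding p_def z_def mnl_prob_def Z_def
    by (simp add: inner_diff_right flip: exp_add)
  then have "(\<Sum>x\<in>Sr s a. p x * exp (z x)) = Z theta' / Z theta"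
    unfolding Z_def by (simp add: sum_divide_distrib)
  then show ?thesis
    using tilt[OF assms(2)] assms(2) Z_pos
    unfolding mnl_prob_def Z_def by simp
qed

lemma mean_abs_deviation_le_bonus1:
  fixes Sr :: "'s \<Rightarrow> 'a \<Rightarrow> 's set" and phi :: "'s \<Rightarrow> 'a \<Rightarrow> 's \<Rightarrow> real^'d"
    and theta theta' :: "real^'d" and s :: 's and a :: 'a
  assumes "pos_def_mat S" "mnorm S (theta - theta') \<le> b"
  defines "p \<equiv> mnl_prob Sr phi theta s a"
    and "z \<equiv> \<lambda>x. phi s a x \<bullet> (theta' - theta)"
  shows "(\<Sum>x\<in>Sr s a. p x * \<bar>z x - (\<Sum>y\<in>Sr s a. p y * z y)\<bar>) \<le> bonus1 Sr phi theta S b s a"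
proof -
  define mean where "mean = (\<Sum>y\<in>Sr s a. p y *\<^sub>R phi s a y)"
  have "z x - (\<Sum>y\<in>Sr s a. p y * z y) = (phi s a x - mean) \<bullet> (theta' - theta)" for x
    unfolding z_def mean_def by (simp add: inner_diff_left inner_sum_left)
  then have "(\<Sum>x\<in>Sr s a. p x * \<bar>z x - (\<Sum>y\<in>Sr s a. p y * z y)\<bar>)
      \<le> (\<Sum>x\<in>Sr s a. p x * (mnorm (matrix_inv S) (phi s a x - mean) * b))"
    using abs_inner_le_confidence_radius[OF assms(1,2)] unfolding p_def
    by (intro sum_mono mult_left_mono) (auto simp: mnl_prob_nonneg)
  also have "\<dots> = bonus1 Sr phi theta S b s a"
    unfolding bonus1_def mean_def p_def by (simp add: sum_distrib_left algebra_simps)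
  finally show ?thesis .
qed

lemma mnl_l1_dist_le_bonus:
  fixes Sr :: "'s \<Rightarrow> 'a \<Rightarrow> 's set" and phi :: "'s \<Rightarrow> 'a \<Rightarrow> 's \<Rightarrow> real^'d"
    and theta theta' :: "real^'d"
  assumes "finite (Sr s a)" "Sr s a \<noteq> {}" "pos_def_mat S"
    and radius: "mnorm S (theta - theta') \<le> b"
  shows "(\<Sum>s'\<in>Sr s a. \<bar>mnl_prob Sr phi theta' s a s' - mnl_prob Sr phi theta s a s'\<bar>)
    \<le> bonus1 Sr phi theta S b s a + bonus2 Sr phi S b s a"
proof -
  define p where "p = mnl_prob Sr phi theta s a"
  define z where "z x = phi s a x \<bullet> (theta' - theta)" for x
  define K where "K = Max ((\<lambda>s'. (mnorm (matrix_inv S) (phi s a s'))\<^sup>2) ` Sr s a)"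
  have "(z x)\<^sup>2 \<le> b\<^sup>2 * K" if "x \<in> Sr s a" for x
  proof -
    have "(z x)\<^sup>2 \<le> (mnorm (matrix_inv S) (phi s a x) * b)\<^sup>2"
      using abs_inner_le_confidence_radius[OF assms(3) radius, of "phi s a x"] unfolding z_def
      by (metis abs_ge_zero power2_abs power_mono)
    also have "\<dots> = b\<^sup>2 * (mnorm (matrix_inv S) (phi s a x))\<^sup>2"
      by (simp add: power_mult_distrib)
    also have "\<dots> \<le> b\<^sup>2 * K"
      unfolding K_def using that assms(1) by (intro mult_left_mono Max_ge) auto
    finally show ?thesis .
  qed
  then have "(\<Sum>x\<in>Sr s a. \<bar>p x * exp (z x) / (\<Sum>y\<in>Sr s a. p y * exp (z y)) - p x\<bar>)
      \<le> (\<Sum>x\<in>Sr s a. p x * \<bar>z x - (\<Sum>y\<in>Sr s a. p y * z y)\<bar>) + 3 * (b\<^sup>2 * K)"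
    using assms(1,2) unfolding p_def
    by (intro exp_tilt_l1_dist_le) (auto simp: mnl_prob_nonneg sum_mnl_prob)
  moreover have "(\<Sum>x\<in>Sr s a. p x * \<bar>z x - (\<Sum>y\<in>Sr s a. p y * z y)\<bar>)
      \<le> bonus1 Sr phi theta S b s a"
    unfolding p_def z_def using mean_abs_deviation_le_bonus1[OF assms(3) radius] .
  moreover have "bonus2 Sr phi S b s a = 3 * (b\<^sup>2 * K)"
    unfolding bonus2_def K_def by simp
  moreover have "(\<Sum>s'\<in>Sr s a. \<bar>mnl_prob Sr phi theta' s a s' - mnl_prob Sr phi theta s a s'\<bar>)
      = (\<Sum>x\<in>Sr s a. \<bar>p x * exp (z x) / (\<Sum>y\<in>Sr s a. p y * exp (z y)) - p x\<bar>)"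
    using mnl_prob_exp_tilt[where Sr=Sr and s=s and a=a and theta=theta and theta'=theta',
        OF assms(1)]
    unfolding p_def z_def by (intro sum.cong) auto
  ultimately show ?thesis by linarith
qed

theorem lemma2:
  fixes Sr :: "'s::finite \<Rightarrow> 'a::finite \<Rightarrow> 's set"
    and phi :: "'s \<Rightarrow> 'a \<Rightarrow> 's \<Rightarrow> real^'d::finite"
    and theta_star :: "real^'d"
    and theta_hat :: "nat \<Rightarrow> real^'d"
    and Sig :: "nat \<Rightarrow> real^'d^'d"
    and beta :: "nat \<Rightarrow> real"
    and L_theta :: real
    and t T :: nat
  assumes "\<And>s a. Sr s a \<noteq> {}"
    and "t \<in> {1..T}"
    and "pos_def_mat (Sig t)"
    and "beta t > 0"
    and "norm theta_star \<le> L_theta"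
    and "mnorm (Sig t) (theta_hat t - theta_star) \<le> beta t"
  shows "(\<lambda>s a s'. mnl_prob Sr phi theta_star s a s')
           \<in> conf_set Sr phi (theta_hat t) (Sig t) (beta t)"
  unfolding conf_set_def
  using mnl_l1_dist_le_bonus[where Sr=Sr and phi=phi, OF finite assms(1) assms(3,6)] assms(1)
  by (simp add: mnl_prob_nonneg mnl_prob_le_one sum_mnl_prob)

end
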